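(* Suppose $\mathscr X\in\mathbb R^{I_1\times\cdots\times I_N}$ and $\pi_n$ is a permutation of $\{1,\dots,I_n\}$ for each $1\leq n\leq N$. Let $r$ be a tensor rank function. Then the tensor $\mathscr Y\in\mathbb R^{I_1\times\cdots\times I_N}$ given by $y_{i_1\cdots i_N}=x_{\pi_1(i_1)\cdots\pi_N(i_N)}$ satisfies $r(\mathscr Y)=r(\mathscr X)$.
   Context: $\mathcal T$ is the collection of all real tensors. A rank-one tensor is one of the form $x_{i_1\cdots i_N}=a^{(1)}_{i_1}\cdots a^{(N)}_{i_N}$ with all $\mathbf a^{(n)}$ nonzero vectors. $\mathscr I_{M,N}$ is the order-$N$ tensor of size $M\times\cdots\times M$ with $1$ in positions $(i,\dots,i)$ and $0$ elsewhere. The mode-$n$ product of $\mathscr X\in\mathbb R^{I_1\times\cdots\times I_N}$ with $\mathbf A\in\mathbb R^{J\times I_n}$ is $\mathscr X\times_n\mathbf A$ with entries $\sum_{i_n=1}^{I_n}x_{i_1\cdots i_N}a_{j i_n}$ at position $(i_1,\dots,i_{n-1},j,i_{n+1},\dots,i_N)$. A tensor rank function is a function $r:\mathcal T\to\mathbb N\cup\{0\}$ such that: (TR1) $r(\mathscr X)=1$ iff $\mathscr X$ is rank-one; (TR2) $r(\mathscr I_{M,N})=M$ whenever $N\ge2$; (TR3) for a matrix $\mathscr X\in\mathbb R^{I_1\times I_2}$, $r(\mathscr X)$ is its matrix rank; (TR4) if $\mathscr X\in\mathbb R^{I_1\times\cdots\times I_N}$ and $\mathscr X'$ is the corresponding tensor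 in $\mathbb R^{I_1\times\cdots\times I_N\times1}$, then $r(\mathscr X)=r(\mathscr X')$; (TR5) for $\pi\in S_N$, the tensor $\mathscr Y$ with $y_{i_1\cdots i_N}=x_{i_{\pi(1)}\cdots i_{\pi(N)}}$ satisfies $r(\mathscr Y)=r(\mathscr X)$; (TR6) $r(\mathscr X\times_n\mathbf A)\le r(\mathscr X)$ for all $\mathscr X\in\mathbb R^{I_1\times\cdots\times I_N}$, $n$, and $\mathbf A\in\mathbb R^{J\times I_n}$. *)

theory Defs
  imports Main "Jordan_Normal_Form.DL_Rank"
begin

text \<open>Tensors are pairs (dims, entries): dims is the list [I_1,...,I_N] (N >= 1, all I_n >= 1),
  entries maps index lists to reals. Indices are 0-based: i_n ranges over {0..<I_n}.
  Entries outside the index range are required to be 0 (canonical representation).\<close>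

type_synonym tensor = "nat list \<times> (nat list \<Rightarrow> real)"

definition valid_index :: "nat list \<Rightarrow> nat list \<Rightarrow> bool" where
  "valid_index d is \<longleftrightarrow> length is = length d \<and> (\<forall>k<length d. is ! k < d ! k)"

definition is_tensor :: "tensor \<Rightarrow> bool" where
  "is_tensor X \<longleftrightarrow> fst X \<noteq> [] \<and> (\<forall>k<length (fst X). 0 < fst X ! k)
     \<and> (\<forall>is. \<not> valid_index (fst X) is \<longrightarrow> snd X is = 0)"

definition rank_one :: "tensor \<Rightarrow> bool" where
  "rank_one X \<longleftrightarrow> (\<exists>a :: nat \<Rightarrow> nat \<Rightarrow> real.
     (\<forall>n<length (fst X). \<exists>i<fst X ! n. a n i \<noteq> 0) \<and>
     (\<forall>is. valid_index (fst X) is \<longrightarrow> snd X is = (\<Prod>n<length (fst X). a n (is ! n))))"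

definition diag_tensor :: "nat \<Rightarrow> nat \<Rightarrow> tensor" where
  "diag_tensor M N = (replicate N M,
     (\<lambda>is. if valid_index (replicate N M) is \<and> (\<forall>k<N. is ! k = is ! 0) then 1 else 0))"

definition matrix_rank_of :: "tensor \<Rightarrow> nat" where
  "matrix_rank_of X = vec_space.rank (fst X ! 0)
      (mat (fst X ! 0) (fst X ! 1) (\<lambda>(i, j). snd X [i, j]))"

definition add_singleton_mode :: "tensor \<Rightarrow> tensor" where
  "add_singleton_mode X = (fst X @ [1],
     (\<lambda>is. if length is = Suc (length (fst X)) \<and> last is = 0 then snd X (butlast is) else 0))"

text \<open>Mode permutation: y_{i_1..i_N} = x_{i_{pi(1)}..i_{pi(N)}} (pi a permutation of {0..<N}).
  The mode pi(k) of Y has size I_k.\<close>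
definition permute_modes :: "(nat \<Rightarrow> nat) \<Rightarrow> tensor \<Rightarrow> tensor" where
  "permute_modes \<pi> X = (let N = length (fst X);
       d' = map (\<lambda>j. fst X ! (the_inv_into {..<N} \<pi> j)) [0..<N] in
     (d', (\<lambda>is. if valid_index d' is then snd X (map (\<lambda>k. is ! (\<pi> k)) [0..<N]) else 0)))"

text \<open>Mode-n product with a J x I_n matrix A (A j i = a_{j i}); n is 0-based.\<close>
definition mode_product :: "tensor \<Rightarrow> nat \<Rightarrow> nat \<Rightarrow> (nat \<Rightarrow> nat \<Rightarrow> real) \<Rightarrow> tensor" where
  "mode_product X n J A = (let d' = (fst X)[n := J] in
     (d', (\<lambda>is. if valid_index d' is
                then (\<Sum>i<fst X ! n. snd X (is[n := i]) * A (is ! n) i) else 0)))"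

definition tensor_rank_function :: "(tensor \<Rightarrow> nat) \<Rightarrow> bool" where
  "tensor_rank_function r \<longleftrightarrow>
     (\<forall>X. is_tensor X \<longrightarrow> (r X = 1 \<longleftrightarrow> rank_one X)) \<and>
     (\<forall>M N. 1 \<le> M \<longrightarrow> 2 \<le> N \<longrightarrow> r (diag_tensor M N) = M) \<and>
     (\<forall>X. is_tensor X \<longrightarrow> length (fst X) = 2 \<longrightarrow> r X = matrix_rank_of X) \<and>
     (\<forall>X. is_tensor X \<longrightarrow> r (add_singleton_mode X) = r X) \<and>
     (\<forall>X \<pi>. is_tensor X \<longrightarrow> \<pi> permutes {..<length (fst X)} \<longrightarrow> r (permute_modes \<pi> X) = r X) \<and>
     (\<forall>X n J A. is_tensor X \<longrightarrow> n < length (fst X) \<longrightarrow> 1 \<le> J \<longrightarrow>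
        r (mode_product X n J A) \<le> r X)"

end

theory Submission
  imports Defs
begin

text \<open>Permuting the indices of mode n is the mode-n product with a permutation matrix, so
  by (TR6) it cannot increase the rank; applying this mode by mode, then again with the inverse
  permutations, gives both inequalities.\<close>

definition reindex :: "(nat \<Rightarrow> nat \<Rightarrow> nat) \<Rightarrow> tensor \<Rightarrow> tensor" where
  "reindex f X = (fst X, (\<lambda>xs. if valid_index (fst X) xs
     then snd X (map (\<lambda>n. f n (xs ! n)) [0..<length (fst X)]) else 0))"

definition maps_indices :: "(nat \<Rightarrow> nat \<Rightarrow> nat) \<Rightarrow> nat list \<Rightarrow> bool" where
  "maps_indices f d \<longleftrightarrow> (\<forall>n<length d. \<forall>i<d ! n. f n i < d ! n)"

lemma fst_reindex [simp]: "fst (reindex f X) = fst X"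
  by (simp add: reindex_def)

lemma is_tensor_reindex: "is_tensor X \<Longrightarrow> is_tensor (reindex f X)"
  unfolding is_tensor_def reindex_def by auto

lemma valid_index_map:
  assumes "maps_indices f d" and "valid_index d xs"
  shows "valid_index d (map (\<lambda>n. f n (xs ! n)) [0..<length d])"
  using assms unfolding maps_indices_def valid_index_def by auto

lemma reindex_cong:
  assumes "\<And>n i. n < length (fst X) \<Longrightarrow> i < fst X ! n \<Longrightarrow> f n i = g n i"
  shows "reindex f X = reindex g X"
proof -
  have "snd (reindex f X) xs = snd (reindex g X) xs" for xs
    using assms by (auto simp: reindex_def valid_index_def intro!: arg_cong[where f = "snd X"])
  then show ?thesis
    by (simp add: prod_eq_iff fun_eq_iff)
qed

lemma reindex_ident:
  assumes "is_tensor X"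
  shows "reindex (\<lambda>_ i. i) X = X"
proof -
  have "snd (reindex (\<lambda>_ i. i) X) xs = snd X xs" for xs
    using assms map_nth[of xs] by (auto simp: reindex_def is_tensor_def valid_index_def)
  then show ?thesis
    by (simp add: prod_eq_iff fun_eq_iff)
qed

lemma reindex_reindex:
  assumes "maps_indices f (fst X)"
  shows "reindex f (reindex g X) = reindex (\<lambda>n. g n \<circ> f n) X"
proof -
  have "snd (reindex f (reindex g X)) xs = snd (reindex (\<lambda>n. g n \<circ> f n) X) xs" for xs
    using valid_index_map[OF assms, of xs]
    by (auto simp: reindex_def intro!: arg_cong[where f = "snd X"])
  then show ?thesis
    by (simp add: prod_eq_iff fun_eq_iff)
qed

lemma mode_product_selection:
  assumes "n < length (fst X)" and "\<And>i. i < fst X ! n \<Longrightarrow> p i < fst X ! n"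
  shows "mode_product X n (fst X ! n) (\<lambda>j i. if i = p j then 1 else 0)
         = reindex (\<lambda>k. if k = n then p else id) X"
proof -
  have "snd (mode_product X n (fst X ! n) (\<lambda>j i. if i = p j then 1 else 0)) xs
        = snd (reindex (\<lambda>k. if k = n then p else id) X) xs" if "valid_index (fst X) xs" for xs
  proof -
    have len: "length xs = length (fst X)" and "xs ! n < fst X ! n"
      using that assms(1) by (auto simp: valid_index_def)
    then have "p (xs ! n) < fst X ! n"
      using assms(2) by blast
    moreover have "map (\<lambda>k. (if k = n then p else id) (xs ! k)) [0..<length (fst X)]
        = xs[n := p (xs ! n)]"
      using len by (intro nth_equalityI) (auto simp: nth_list_update)
    ultimately show ?thesis
      using that by (simp add: mode_product_def reindex_def Let_def if_distrib cong: if_cong)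
  qed
  then show ?thesis
    by (auto simp: prod_eq_iff fun_eq_iff mode_product_def reindex_def Let_def)
qed

lemma rank_reindex_mode_le:
  assumes r: "tensor_rank_function r" and X: "is_tensor X" and n: "n < length (fst X)"
    and p: "\<And>i. i < fst X ! n \<Longrightarrow> p i < fst X ! n"
  shows "r (reindex (\<lambda>k. if k = n then p else id) X) \<le> r X"
proof -
  have "1 \<le> fst X ! n"
    using X n by (simp add: is_tensor_def Suc_le_eq)
  then have "r (mode_product X n (fst X ! n) (\<lambda>j i. if i = p j then 1 else 0)) \<le> r X"
    using r X n unfolding tensor_rank_function_def by blast
  then show ?thesis
    using mode_product_selection[OF n p] by simp
qed

lemma rank_reindex_le:
  assumes r: "tensor_rank_function r" and X: "is_tensor X" and f: "maps_indices f (fst X)"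
  shows "r (reindex f X) \<le> r X"
proof -
  define prefix where "prefix m = (\<lambda>k. if k < m then f k else id)" for m
  have "r (reindex (prefix m) X) \<le> r X" if "m \<le> length (fst X)" for m
    using that
  proof (induction m)
    case 0
    then show ?case
      using reindex_ident[OF X] by (simp add: prefix_def id_def)
  next
    case (Suc m)
    have m: "m < length (fst X)"
      using Suc.prems by simp
    have "reindex (prefix (Suc m)) X
        = reindex (\<lambda>k. if k = m then f m else id) (reindex (prefix m) X)"
      using f m by (subst reindex_reindex) (auto simp: maps_indices_def prefix_def intro!: reindex_cong)
    also have "r \<dots> \<le> r (reindex (prefix m) X)"
      using f m by (intro rank_reindex_mode_le r is_tensor_reindex X) (auto simp: maps_indices_def)
    also have "\<dots> \<le> r X"
      using Suc by simp
    finally show ?case .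
  qed
  moreover have "reindex (prefix (length (fst X))) X = reindex f X"
    by (rule reindex_cong) (simp add: prefix_def)
  ultimately show ?thesis
    by (metis order_refl)
qed

theorem proposition4p4:
  fixes r :: "tensor \<Rightarrow> nat" and X :: tensor and \<sigma> :: "nat \<Rightarrow> nat \<Rightarrow> nat"
  assumes "tensor_rank_function r"
    and "is_tensor X"
    and "\<forall>n<length (fst X). \<sigma> n permutes {..<fst X ! n}"
  shows "r (fst X, (\<lambda>is. if valid_index (fst X) is
                          then snd X (map (\<lambda>n. \<sigma> n (is ! n)) [0..<length (fst X)]) else 0))
         = r X"
proof -
  have \<sigma>_maps: "maps_indices \<sigma> (fst X)"
    and inv_maps: "maps_indices (\<lambda>n. inv_into UNIV (\<sigma> n)) (fst X)"
    using assms(3) permutes_inv by (fastforce simp: maps_indices_def dest: permutes_in_image)+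
  have "reindex (\<lambda>n. inv_into UNIV (\<sigma> n)) (reindex \<sigma> X)
      = reindex (\<lambda>n. \<sigma> n \<circ> inv_into UNIV (\<sigma> n)) X"
    by (rule reindex_reindex[OF inv_maps])
  also have "\<dots> = reindex (\<lambda>_ i. i) X"
    using assms(3) by (intro reindex_cong) (auto intro: permutes_inverses(1))
  also have "\<dots> = X"
    by (rule reindex_ident[OF assms(2)])
  finally have X_back: "reindex (\<lambda>n. inv_into UNIV (\<sigma> n)) (reindex \<sigma> X) = X" .
  have "r (reindex (\<lambda>n. inv_into UNIV (\<sigma> n)) (reindex \<sigma> X)) \<le> r (reindex \<sigma> X)"
    using inv_maps by (intro rank_reindex_le assms(1) is_tensor_reindex assms(2)) simp
  then have "r X \<le> r (reindex \<sigma> X)"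
    by (simp only: X_back)
  moreover have "r (reindex \<sigma> X) \<le> r X"
    by (rule rank_reindex_le[OF assms(1,2) \<sigma>_maps])
  ultimately show ?thesis
    by (simp add: reindex_def)
qed

end
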